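(* For $\theta>0$ let $U_1,U_2,\dots$ be i.i.d. random variables with the $\mathrm{Beta}(1,\theta)$ distribution, and set $X_1=U_1$ and $X_n=(1-U_1)\cdots(1-U_{n-1})U_n$ for $n\ge 2$. Let $\Pi^{\mathrm{gem}}_\theta$ denote the law of $\mathbf X=(X_1,X_2,\dots)$ on $$\Delta=\Big\{(x_1,x_2,\dots): x_k\ge 0 \text{ for all } k,\ \sum_{i=1}^\infty x_i\le 1\Big\},$$ equipped with the subspace topology of $\mathbb R^\infty$ (product topology). Then, as $\theta\to\infty$, the family $\{\Pi^{\mathrm{gem}}_\theta:\theta>0\}$ satisfies a large deviation principle on $\Delta$ with speed $\theta$ and rate function $$S(\mathbf x)=\begin{cases}\log\dfrac{1}{1-\sum_{k=1}^\infty x_k}, & \mathbf x=(x_1,x_2,\dots)\in\Delta,\ \sum_{k=1}^\infty x_k<1,\\ \infty, & \text{otherwise}.\end{cases}$$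
   Context: An LDP with speed $\theta$ and rate function $I$ means: for closed $F$, $\limsup_{\theta\to\infty}\theta^{-1}\log P(F)\le-\inf_F I$, and for open $G$, $\liminf_{\theta\to\infty}\theta^{-1}\log P(G)\ge-\inf_G I$. *)

theory Defs
  imports "HOL-Probability.Probability"
begin

definition beta1 :: "real \<Rightarrow> real measure" where
  "beta1 \<theta> = density lborel
     (\<lambda>u. ennreal (indicator {0<..<1} u * \<theta> * (1 - u) powr (\<theta> - 1)))"

text \<open>Stick-breaking map (0-indexed): X n = (1-U 0)...(1-U (n-1)) * U n.\<close>
definition gem_map :: "(nat \<Rightarrow> real) \<Rightarrow> (nat \<Rightarrow> real)" where
  "gem_map u = (\<lambda>n. (\<Prod>i<n. 1 - u i) * u n)"

definition gem_law :: "real \<Rightarrow> (nat \<Rightarrow> real) measure" where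
  "gem_law \<theta> = distr (PiM UNIV (\<lambda>_. beta1 \<theta>)) borel gem_map"

definition gem_simplex :: "(nat \<Rightarrow> real) set" where
  "gem_simplex = {x. (\<forall>k. 0 \<le> x k) \<and> summable x \<and> suminf x \<le> 1}"

definition gem_rate :: "(nat \<Rightarrow> real) \<Rightarrow> ereal" where
  "gem_rate x = (if x \<in> gem_simplex \<and> suminf x < 1
                 then ereal (ln (1 / (1 - suminf x))) else \<infinity>)"

definition elog :: "real \<Rightarrow> ereal" where
  "elog p = (if 0 < p then ereal (ln p) else -\<infinity>)"

end

theory Submission
  imports Defs
begin

text \<open>
  Let \<open>X = gem_map U\<close>. The event \<open>X i \<ge> a i\<close> for all \<open>i < n\<close> forces
  \<open>U i \<ge> stick_ratio a i\<close>, the share that \<open>a i\<close> takes of the stick still left at step \<open>i\<close>.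
  These are independent Beta(1,\<theta>) tail events of probability \<open>(1 - stick_ratio a i) powr \<theta>\<close>,
  and the product telescopes to \<open>(1 - (\<Sum>i<n. a i)) powr \<theta>\<close>. Finitely many such events cover
  a closed subset of the compact simplex, which gives the upper bound. Conversely, a small box
  in \<open>U\<close>-space around \<open>stick_ratio x\<close> is mapped into any cylinder neighbourhood of \<open>x\<close>;
  for large \<open>\<theta>\<close> each factor of its probability is at least half of
  \<open>(1 - stick_ratio x i) powr \<theta>\<close>, so the neighbourhood has probability at least
  \<open>(1/2)^n * (1 - suminf x) powr \<theta>\<close>, which gives the lower bound.
\<close>

lemma beta1_density_integral:
  fixes a b \<theta> :: real
  assumes ab: "0 \<le> a" "a < b" "b \<le> 1" and \<theta>: "0 < \<theta>"
  shows "set_integrable lborel {a<..<b} (\<lambda>x. \<theta> * (1 - x) powr (\<theta> - 1))"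
    "(LBINT x=ereal a..ereal b. \<theta> * (1 - x) powr (\<theta> - 1)) = (1 - a) powr \<theta> - (1 - b) powr \<theta>"
proof -
  let ?F = "\<lambda>x::real. - ((1 - x) powr \<theta>)"
  have deriv: "DERIV ?F x :> \<theta> * (1 - x) powr (\<theta> - 1)" if "x < 1" for x
    using that by (auto intro!: derivative_eq_intros)
  have cont: "isCont (\<lambda>x. \<theta> * (1 - x) powr (\<theta> - 1)) x" if "x < 1" for x
    using that by (auto intro!: continuous_intros)
  have lim_a: "((?F \<circ> real_of_ereal) \<longlongrightarrow> ?F a) (at_right (ereal a))"
    using ab unfolding ereal_tendsto_simps by (auto intro!: tendsto_eq_intros)
  have "((\<lambda>x::real. (1 - x) powr \<theta>) \<longlongrightarrow> (1 - b) powr \<theta>) (at_left b)"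
  proof (cases "b = 1")
    case True
    have "((\<lambda>x::real. (1 - x) powr \<theta>) \<longlongrightarrow> 0) (at_left 1)"
      using \<theta> by (intro tendsto_zero_powrI) (auto intro!: tendsto_eq_intros eventually_at_leftI[of 0])
    then show ?thesis using True by simp
  next
    case False
    then show ?thesis using ab by (auto intro!: tendsto_eq_intros)
  qed
  then have lim_b: "((?F \<circ> real_of_ereal) \<longlongrightarrow> ?F b) (at_left (ereal b))"
    unfolding ereal_tendsto_simps by (simp add: o_def tendsto_minus)
  have "a < ereal x \<Longrightarrow> ereal x < b \<Longrightarrow> x < 1" for x using ab by auto
  then show "set_integrable lborel {a<..<b} (\<lambda>x. \<theta> * (1 - x) powr (\<theta> - 1))"
    "(LBINT x=ereal a..ereal b. \<theta> * (1 - x) powr (\<theta> - 1)) = (1 - a) powr \<theta> - (1 - b) powr \<theta>"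
    using interval_integral_FTC_nonneg[of "ereal a" "ereal b" ?F "\<lambda>x. \<theta> * (1 - x) powr (\<theta> - 1)",
        OF _ _ _ _ lim_a lim_b]
      deriv cont \<theta> ab by auto
qed

lemma sets_beta1 [simp]: "sets (beta1 \<theta>) = sets borel"
  and space_beta1 [simp]: "space (beta1 \<theta>) = UNIV"
  by (auto simp: beta1_def)

lemma emeasure_beta1_restrict:
  assumes "A \<in> sets borel"
  shows "emeasure (beta1 \<theta>) A = emeasure (beta1 \<theta>) (A \<inter> {0<..<1})"
  unfolding beta1_def using assms
  by (subst (1 2) emeasure_density) (auto intro!: nn_integral_cong simp: indicator_def)

lemma emeasure_beta1_Ioo:
  fixes a b \<theta> :: real
  assumes ab: "0 \<le> a" "a < b" "b \<le> 1" and \<theta>: "0 < \<theta>"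
  shows "emeasure (beta1 \<theta>) {a<..<b} = ennreal ((1 - a) powr \<theta> - (1 - b) powr \<theta>)"
proof -
  note density = beta1_density_integral[OF ab \<theta>]
  have "emeasure (beta1 \<theta>) {a<..<b}
      = (\<integral>\<^sup>+x. ennreal (indicator {a<..<b} x *\<^sub>R (\<theta> * (1 - x) powr (\<theta> - 1))) \<partial>lborel)"
    unfolding beta1_def using ab
    by (subst emeasure_density) (auto intro!: nn_integral_cong simp: indicator_def)
  also have "\<dots> = ennreal (LINT x:{a<..<b}|lborel. \<theta> * (1 - x) powr (\<theta> - 1))"
    unfolding set_lebesgue_integral_def
    using density(1) \<theta> unfolding set_integrable_def
    by (intro nn_integral_eq_integral) (auto simp: indicator_def)
  also have "\<dots> = ennreal ((1 - a) powr \<theta> - (1 - b) powr \<theta>)"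
    using density(2) ab by (simp add: interval_lebesgue_integral_le_eq)
  finally show ?thesis .
qed

lemma prob_space_beta1: "0 < \<theta> \<Longrightarrow> prob_space (beta1 \<theta>)"
  using emeasure_beta1_restrict[of UNIV \<theta>] emeasure_beta1_Ioo[of 0 1 \<theta>]
  by (intro prob_spaceI) simp

lemma measure_beta1_Ioo:
  fixes a b \<theta> :: real
  assumes ab: "0 \<le> a" "a < b" "b \<le> 1" and \<theta>: "0 < \<theta>"
  shows "measure (beta1 \<theta>) {a<..<b} = (1 - a) powr \<theta> - (1 - b) powr \<theta>"
proof -
  have "(1 - b) powr \<theta> \<le> (1 - a) powr \<theta>" using ab \<theta> by (intro powr_mono2) auto
  then show ?thesis using emeasure_beta1_Ioo[OF assms] by (simp add: measure_def)
qed

lemma measure_beta1_atLeast_le: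
  fixes c \<theta> :: real
  assumes c: "0 \<le> c" "c < 1" and \<theta>: "0 < \<theta>"
  shows "measure (beta1 \<theta>) {c..} \<le> (1 - c) powr \<theta>"
proof -
  interpret prob_space "beta1 \<theta>" by (rule prob_space_beta1[OF \<theta>])
  show ?thesis
  proof (cases "c = 0")
    case True
    then show ?thesis by simp
  next
    case False
    have "measure (beta1 \<theta>) {c..} = 1 - measure (beta1 \<theta>) {..<c}"
      using prob_compl[of "{..<c}"] by (simp add: Compl_eq_Diff_UNIV[symmetric] not_less atLeast_def)
    also have "\<dots> \<le> 1 - measure (beta1 \<theta>) {0<..<c}"
      by (intro diff_left_mono finite_measure_mono) auto
    also have "\<dots> = (1 - c) powr \<theta>"
      using measure_beta1_Ioo[of 0 c \<theta>] False c \<theta> by simp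
    finally show ?thesis .
  qed
qed

definition stick_ratio :: "(nat \<Rightarrow> real) \<Rightarrow> nat \<Rightarrow> real" where
  "stick_ratio a i = a i / (1 - (\<Sum>j<i. a j))"

lemma partial_sum_lt_1_mono:
  fixes a :: "nat \<Rightarrow> real"
  assumes "\<forall>i<n. 0 \<le> a i" "(\<Sum>i<n. a i) < 1" "m \<le> n"
  shows "(\<Sum>i<m. a i) < 1"
proof -
  have "(\<Sum>i<m. a i) \<le> (\<Sum>i<n. a i)" using assms by (intro sum_mono2) auto
  then show ?thesis using assms by simp
qed

lemma prod_one_minus_stick_ratio:
  assumes "\<forall>i<n. 0 \<le> a i" "(\<Sum>i<n. a i) < 1"
  shows "(\<Prod>i<n. 1 - stick_ratio a i) = 1 - (\<Sum>i<n. a i)"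
  using assms
proof (induction n)
  case 0
  then show ?case by simp
next
  case (Suc n)
  have less: "(\<Sum>i<n. a i) < 1" using partial_sum_lt_1_mono[OF Suc.prems, of n] by simp
  then have "(\<Prod>i<n. 1 - stick_ratio a i) = 1 - (\<Sum>i<n. a i)" using Suc by auto
  then have "(\<Prod>i<Suc n. 1 - stick_ratio a i) = (1 - (\<Sum>i<n. a i)) * (1 - stick_ratio a n)"
    by simp
  also have "\<dots> = 1 - (\<Sum>i<Suc n. a i)" using less by (simp add: stick_ratio_def field_simps)
  finally show ?case .
qed

lemma stick_ratio_bounds:
  assumes "\<forall>i<n. 0 \<le> a i" "(\<Sum>i<n. a i) < 1" "i < n"
  shows "0 \<le> stick_ratio a i" "stick_ratio a i < 1"
proof -
  have "(\<Sum>j<i. a j) < 1" "(\<Sum>j<Suc i. a j) < 1"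
    using partial_sum_lt_1_mono[OF assms(1,2), of i] partial_sum_lt_1_mono[OF assms(1,2), of "Suc i"]
      assms(3) by auto
  then show "0 \<le> stick_ratio a i" "stick_ratio a i < 1"
    using assms unfolding stick_ratio_def by (auto simp: divide_less_eq)
qed

lemma sum_gem_map: "(\<Sum>i<n. gem_map u i) = 1 - (\<Prod>i<n. 1 - u i)"
  by (induction n) (auto simp: gem_map_def algebra_simps)

lemma gem_map_stick_ratio:
  assumes "\<forall>i<n. 0 \<le> a i" "(\<Sum>i<n. a i) < 1" "i < n"
  shows "gem_map (stick_ratio a) i = a i"
proof -
  have less: "(\<Sum>j<i. a j) < 1" using partial_sum_lt_1_mono[OF assms(1,2), of i] assms by simp
  have "(\<Prod>j<i. 1 - stick_ratio a j) = 1 - (\<Sum>j<i. a j)"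
    using assms less by (intro prod_one_minus_stick_ratio) auto
  then show ?thesis using less by (simp add: gem_map_def stick_ratio_def)
qed

lemma gem_map_nonneg: "(\<forall>j. 0 \<le> u j \<and> u j \<le> 1) \<Longrightarrow> 0 \<le> gem_map u i"
  unfolding gem_map_def by (auto intro!: mult_nonneg_nonneg prod_nonneg)

lemma gem_simplex_iff_partial_sums:
  "x \<in> gem_simplex \<longleftrightarrow> (\<forall>k. 0 \<le> x k) \<and> (\<forall>n. (\<Sum>i<n. x i) \<le> 1)"
proof
  assume "x \<in> gem_simplex"
  then have x: "\<forall>k. 0 \<le> x k" "summable x" "suminf x \<le> 1" unfolding gem_simplex_def by auto
  have "(\<Sum>i<n. x i) \<le> 1" for n using sum_le_suminf[of x "{..<n}"] x by fastforce
  then show "(\<forall>k. 0 \<le> x k) \<and> (\<forall>n. (\<Sum>i<n. x i) \<le> 1)" using x by blast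
next
  assume x: "(\<forall>k. 0 \<le> x k) \<and> (\<forall>n. (\<Sum>i<n. x i) \<le> 1)"
  then have "summable x" by (intro summableI_nonneg_bounded[of x]) auto
  then show "x \<in> gem_simplex" unfolding gem_simplex_def using x suminf_le_const by blast
qed

lemma gem_map_in_simplex:
  assumes "\<forall>j. 0 \<le> u j \<and> u j \<le> 1"
  shows "gem_map u \<in> gem_simplex"
  using assms gem_map_nonneg by (simp add: gem_simplex_iff_partial_sums sum_gem_map prod_nonneg)

lemma stick_ratio_le_of_le_gem_map:
  fixes u a :: "nat \<Rightarrow> real" and n i :: nat
  assumes u: "\<forall>j. 0 \<le> u j \<and> u j \<le> 1"
    and a: "\<forall>i<n. 0 \<le> a i" "(\<Sum>i<n. a i) < 1"
    and le: "\<forall>i<n. a i \<le> gem_map u i" and i: "i < n"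
  shows "stick_ratio a i \<le> u i"
proof -
  define Q where "Q = (\<Prod>j<i. 1 - u j)"
  have "0 \<le> Q" unfolding Q_def using u by (auto intro!: prod_nonneg)
  have "(\<Sum>j<i. a j) \<le> (\<Sum>j<i. gem_map u j)" using le i by (intro sum_mono) auto
  then have Q_le: "Q \<le> 1 - (\<Sum>j<i. a j)" using sum_gem_map[of u i] unfolding Q_def by simp
  have a_le: "a i \<le> Q * u i" using le i unfolding gem_map_def Q_def by auto
  show ?thesis
  proof (cases "Q = 0")
    case True
    then have "a i = 0" using a_le a i by force
    then show ?thesis using u by (simp add: stick_ratio_def)
  next
    case False
    with \<open>0 \<le> Q\<close> have "0 < Q" by simp
    then have "stick_ratio a i \<le> a i / Q"
      unfolding stick_ratio_def using Q_le a i by (intro divide_left_mono) auto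
    also have "\<dots> \<le> u i" using a_le \<open>0 < Q\<close> by (simp add: divide_le_eq mult.commute)
    finally show ?thesis .
  qed
qed

lemma abs_mult_diff_le:
  fixes a b c d :: real
  assumes "0 \<le> b" "b \<le> 1" "0 \<le> c" "c \<le> 1"
  shows "\<bar>a * c - b * d\<bar> \<le> \<bar>a - b\<bar> + \<bar>c - d\<bar>"
proof -
  have "\<bar>a * c - b * d\<bar> = \<bar>(a - b) * c + b * (c - d)\<bar>" by (simp add: algebra_simps)
  also have "\<dots> \<le> \<bar>a - b\<bar> * \<bar>c\<bar> + \<bar>b\<bar> * \<bar>c - d\<bar>" by (metis abs_mult abs_triangle_ineq)
  also have "\<dots> \<le> \<bar>a - b\<bar> * 1 + 1 * \<bar>c - d\<bar>" using assms by (intro add_mono mult_mono) auto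
  finally show ?thesis by simp
qed

lemma abs_prod_one_minus_diff_le:
  fixes u v :: "nat \<Rightarrow> real"
  assumes "\<forall>j<i. 0 \<le> u j \<and> u j \<le> 1" "\<forall>j<i. 0 \<le> v j \<and> v j \<le> 1"
  shows "\<bar>(\<Prod>j<i. 1 - u j) - (\<Prod>j<i. 1 - v j)\<bar> \<le> (\<Sum>j<i. \<bar>u j - v j\<bar>)"
  using assms
proof (induction i)
  case 0
  then show ?case by simp
next
  case (Suc i)
  have "\<bar>(\<Prod>j<Suc i. 1 - u j) - (\<Prod>j<Suc i. 1 - v j)\<bar>
      = \<bar>(1 - u i) * (\<Prod>j<i. 1 - u j) - (1 - v i) * (\<Prod>j<i. 1 - v j)\<bar>"
    by (simp add: mult.commute)
  also have "\<dots> \<le> \<bar>(1 - u i) - (1 - v i)\<bar> + \<bar>(\<Prod>j<i. 1 - u j) - (\<Prod>j<i. 1 - v j)\<bar>"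
    using Suc.prems by (intro abs_mult_diff_le) (auto intro!: prod_nonneg prod_le_1)
  also have "\<dots> \<le> \<bar>u i - v i\<bar> + (\<Sum>j<i. \<bar>u j - v j\<bar>)" using Suc by simp
  finally show ?case by simp
qed

lemma abs_gem_map_diff_le:
  fixes u v :: "nat \<Rightarrow> real"
  assumes "\<forall>j\<le>i. 0 \<le> u j \<and> u j \<le> 1" "\<forall>j\<le>i. 0 \<le> v j \<and> v j \<le> 1"
  shows "\<bar>gem_map u i - gem_map v i\<bar> \<le> (\<Sum>j<Suc i. \<bar>u j - v j\<bar>)"
proof -
  have "\<bar>gem_map u i - gem_map v i\<bar> = \<bar>u i * (\<Prod>j<i. 1 - u j) - v i * (\<Prod>j<i. 1 - v j)\<bar>"
    by (simp add: gem_map_def mult.commute)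
  also have "\<dots> \<le> \<bar>u i - v i\<bar> + \<bar>(\<Prod>j<i. 1 - u j) - (\<Prod>j<i. 1 - v j)\<bar>"
    using assms by (intro abs_mult_diff_le) (auto intro!: prod_nonneg prod_le_1)
  also have "\<dots> \<le> \<bar>u i - v i\<bar> + (\<Sum>j<i. \<bar>u j - v j\<bar>)"
    using assms by (intro add_left_mono abs_prod_one_minus_diff_le) auto
  finally show ?thesis by simp
qed

lemma closed_gem_simplex: "closed gem_simplex"
proof -
  have eq: "gem_simplex = {x. \<forall>k. 0 \<le> x k} \<inter> {x. \<forall>n. (\<Sum>i<n. x i) \<le> 1}"
    using gem_simplex_iff_partial_sums by blast
  show ?thesis
    unfolding eq by (intro closed_Int closed_Collect_all closed_Collect_le continuous_intros
        continuous_on_product_coordinates)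
qed

lemma compact_gem_simplex: "compact gem_simplex"
proof -
  have "compactin (product_topology (\<lambda>_::nat. euclidean) UNIV) (PiE UNIV (\<lambda>_. {0..1::real}))"
    by (subst compactin_PiE) simp
  then have cube: "compact (PiE UNIV (\<lambda>_::nat. {0..1::real}))"
    by (simp add: euclidean_product_topology)
  have "x k \<le> 1" if "x \<in> gem_simplex" for x k
  proof -
    have "x k = (\<Sum>i\<in>{k}. x i)" by simp
    also have "\<dots> \<le> (\<Sum>i<Suc k. x i)"
      using that by (intro sum_mono2) (auto simp: gem_simplex_iff_partial_sums)
    also have "\<dots> \<le> 1" using that unfolding gem_simplex_iff_partial_sums by blast
    finally show ?thesis .
  qed
  then have "PiE UNIV (\<lambda>_. {0..1}) \<inter> gem_simplex = gem_simplex"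
    by (auto simp: PiE_UNIV_domain Pi_iff gem_simplex_iff_partial_sums)
  then show ?thesis using compact_Int_closed[OF cube closed_gem_simplex] by simp
qed

lemma closed_Collect_ge_coordinates: "closed {y::nat \<Rightarrow> real. \<forall>i<n. a i \<le> y i}"
proof -
  have eq: "{y::nat \<Rightarrow> real. \<forall>i<n. a i \<le> y i} = (\<Inter>i\<in>{..<n}. {y. a i \<le> y i})" by auto
  show ?thesis
    unfolding eq by (intro closed_INT ballI closed_Collect_le continuous_intros
        continuous_on_product_coordinates)
qed

lemma open_contains_cylinder:
  fixes V :: "(nat \<Rightarrow> real) set"
  assumes "open V" "x \<in> V"
  obtains n \<epsilon> where "0 < \<epsilon>" "\<And>y. \<forall>i<n. \<bar>y i - x i\<bar> < \<epsilon> \<Longrightarrow> y \<in> V"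
proof -
  have "openin (product_topology (\<lambda>i. euclidean) UNIV) V" using assms(1) unfolding open_fun_def .
  from product_topology_open_contains_basis[OF this assms(2)]
  obtain X where X: "x \<in> PiE UNIV X" "\<And>i. open (X i)" "finite {i. X i \<noteq> UNIV}" "PiE UNIV X \<subseteq> V"
    by auto
  have "\<exists>e>0. \<forall>t. \<bar>t - x i\<bar> < e \<longrightarrow> t \<in> X i" for i
    using X(1) X(2)[of i] unfolding open_dist dist_real_def by (simp add: PiE_UNIV_domain Pi_iff)
  then obtain e where e: "\<And>i. 0 < e i" "\<And>i t. \<bar>t - x i\<bar> < e i \<Longrightarrow> t \<in> X i" by metis
  define J where "J = {i. X i \<noteq> UNIV}"
  obtain n where n: "J \<subseteq> {..<n}" using finite_nat_bounded X(3) unfolding J_def by blast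
  define \<epsilon> where "\<epsilon> = Min (insert 1 (e ` J))"
  have fin: "finite (insert 1 (e ` J))" using X(3) unfolding J_def by simp
  show ?thesis
  proof
    show "0 < \<epsilon>" unfolding \<epsilon>_def using fin e(1) by (subst Min_gr_iff) auto
    fix y assume y: "\<forall>i<n. \<bar>y i - x i\<bar> < \<epsilon>"
    have "y i \<in> X i" for i
    proof (cases "i \<in> J")
      case True
      then have "\<epsilon> \<le> e i" unfolding \<epsilon>_def using fin by (intro Min_le) auto
      then show ?thesis using y n True by (intro e(2)) force
    next
      case False
      then show ?thesis unfolding J_def by simp
    qed
    then show "y \<in> V" using X(4) by (auto simp: PiE_UNIV_domain Pi_iff)
  qed
qed

abbreviation beta1_iid :: "real \<Rightarrow> (nat \<Rightarrow> real) measure" where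
  "beta1_iid \<theta> \<equiv> PiM UNIV (\<lambda>_::nat. beta1 \<theta>)"

lemma gem_map_measurable: "gem_map \<in> measurable (beta1_iid \<theta>) borel"
proof -
  have "sets (beta1_iid \<theta>) = sets (PiM UNIV (\<lambda>_. borel :: real measure))"
    by (intro sets_PiM_cong) auto
  then have eq: "measurable (beta1_iid \<theta>) borel = measurable (PiM UNIV (\<lambda>_. borel :: real measure)) borel"
    by (rule measurable_cong_sets) simp
  have "(\<lambda>u::nat \<Rightarrow> real. (\<Prod>i<n. 1 - u i) * u n) \<in> borel_measurable (PiM UNIV (\<lambda>_. borel :: real measure))"
    for n by measurable
  then show ?thesis
    unfolding eq gem_map_def by (rule measurable_coordinatewise_then_product)
qed

lemma prob_space_beta1_iid: "0 < \<theta> \<Longrightarrow> prob_space (beta1_iid \<theta>)"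
  by (intro prob_space_PiM prob_space_beta1)

lemma prob_space_gem_law: "0 < \<theta> \<Longrightarrow> prob_space (gem_law \<theta>)"
  unfolding gem_law_def
  by (intro prob_space.prob_space_distr prob_space_beta1_iid gem_map_measurable)

lemma measure_gem_law:
  "S \<in> sets borel \<Longrightarrow> measure (gem_law \<theta>) S = measure (beta1_iid \<theta>) (gem_map -` S)"
  unfolding gem_law_def by (subst measure_distr[OF gem_map_measurable]) (simp_all add: space_PiM)

lemma Collect_box_eq_prod_emb:
  "{u. \<forall>i<n. u i \<in> A i} = prod_emb UNIV (\<lambda>_. beta1 \<theta>) {..<n} (PiE {..<n} A)"
  by (auto simp: prod_emb_def PiE_UNIV_domain restrict_PiE_iff Pi_iff)

lemma sets_beta1_iid_box:
  "(\<And>i. A i \<in> sets borel) \<Longrightarrow> {u. \<forall>i<n. u i \<in> A i} \<in> sets (beta1_iid \<theta>)"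
  unfolding Collect_box_eq_prod_emb[of n A \<theta>] by (intro sets_PiM_I) auto

lemma measure_beta1_iid_box:
  assumes \<theta>: "0 < \<theta>" and A: "\<And>i. A i \<in> sets borel"
  shows "measure (beta1_iid \<theta>) {u. \<forall>i<n. u i \<in> A i} = (\<Prod>i<n. measure (beta1 \<theta>) (A i))"
proof -
  interpret product_prob_space "\<lambda>_. beta1 \<theta>" UNIV
    using prob_space_beta1[OF \<theta>]
    by (simp add: product_prob_space_def product_prob_space_axioms_def product_sigma_finite_def
        prob_space_imp_sigma_finite)
  show ?thesis using A unfolding Collect_box_eq_prod_emb[of n A \<theta>] by (simp add: measure_PiM_emb)
qed

lemma AE_beta1_iid: "0 < \<theta> \<Longrightarrow> AE u in beta1_iid \<theta>. \<forall>j. 0 \<le> u j \<and> u j \<le> 1"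
proof -
  assume \<theta>: "0 < \<theta>"
  have "AE x in beta1 \<theta>. 0 \<le> x \<and> x \<le> 1"
    using emeasure_beta1_restrict[of "- {0<..<1}" \<theta>]
    by (intro AE_I[where N="- {0<..<1}"]) auto
  then have "AE u in beta1_iid \<theta>. 0 \<le> u j \<and> u j \<le> 1" for j
    using prob_space_beta1[OF \<theta>] by (intro AE_PiM_component) auto
  then show ?thesis by (subst AE_all_countable) blast
qed

lemma measure_gem_law_Collect_ge_le:
  assumes \<theta>: "0 < \<theta>" and a: "\<forall>i<n. 0 \<le> a i" "(\<Sum>i<n. a i) < 1"
  shows "measure (gem_law \<theta>) {y. \<forall>i<n. a i \<le> y i} \<le> (1 - (\<Sum>i<n. a i)) powr \<theta>"
proof -
  interpret prob_space "beta1_iid \<theta>" by (rule prob_space_beta1_iid[OF \<theta>])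
  let ?S = "{y. \<forall>i<n. a i \<le> y i}"
  let ?B = "{u. \<forall>i<n. u i \<in> {stick_ratio a i..}}"
  have "measure (gem_law \<theta>) ?S = measure (beta1_iid \<theta>) (gem_map -` ?S)"
    using closed_Collect_ge_coordinates by (intro measure_gem_law borel_closed)
  also have "\<dots> \<le> measure (beta1_iid \<theta>) ?B"
  proof (rule finite_measure_mono_AE)
    show "AE u in beta1_iid \<theta>. u \<in> gem_map -` ?S \<longrightarrow> u \<in> ?B"
      using AE_beta1_iid[OF \<theta>] by eventually_elim (auto intro: stick_ratio_le_of_le_gem_map[OF _ a])
    show "?B \<in> sets (beta1_iid \<theta>)"
      by (rule sets_beta1_iid_box) simp
  qed
  also have "\<dots> = (\<Prod>i<n. measure (beta1 \<theta>) {stick_ratio a i..})"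
    by (rule measure_beta1_iid_box[OF \<theta>]) simp
  also have "\<dots> \<le> (\<Prod>i<n. (1 - stick_ratio a i) powr \<theta>)"
    by (intro prod_mono conjI measure_nonneg measure_beta1_atLeast_le \<theta> stick_ratio_bounds[OF a]) simp_all
  also have "\<dots> = (\<Prod>i<n. 1 - stick_ratio a i) powr \<theta>"
    by (rule prod_powr_distrib[symmetric])
  also have "\<dots> = (1 - (\<Sum>i<n. a i)) powr \<theta>"
    using prod_one_minus_stick_ratio[OF a] by simp
  finally show ?thesis .
qed

lemma abs_gem_map_diff_le_near_stick_ratio:
  assumes x: "\<forall>i<n. 0 \<le> x i" "(\<Sum>i<n. x i) < 1" and u: "\<forall>j. 0 \<le> u j \<and> u j \<le> 1"
    and near: "\<forall>j<n. \<bar>u j - stick_ratio x j\<bar> \<le> \<eta>" and i: "i < n"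
  shows "\<bar>gem_map u i - x i\<bar> \<le> real n * \<eta>"
proof -
  have "0 \<le> \<eta>" using near i by (meson abs_ge_zero order_trans zero_le)
  have v: "\<forall>j\<le>i. 0 \<le> stick_ratio x j \<and> stick_ratio x j \<le> 1"
    using stick_ratio_bounds[OF x] i by (meson le_less_trans less_imp_le)
  have "\<bar>gem_map u i - x i\<bar> = \<bar>gem_map u i - gem_map (stick_ratio x) i\<bar>"
    using gem_map_stick_ratio[OF x i] by simp
  also have "\<dots> \<le> (\<Sum>j<Suc i. \<bar>u j - stick_ratio x j\<bar>)"
    using u v by (intro abs_gem_map_diff_le) auto
  also have "\<dots> \<le> (\<Sum>j<Suc i. \<eta>)"
    using near i by (intro sum_mono) auto
  also have "\<dots> \<le> real n * \<eta>"
    using i \<open>0 \<le> \<eta>\<close> by (simp add: mult_right_mono)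
  finally show ?thesis .
qed

lemma measure_gem_law_ge_prod:
  fixes x :: "nat \<Rightarrow> real"
  assumes \<theta>: "0 < \<theta>" and x: "\<forall>i<n. 0 \<le> x i" "(\<Sum>i<n. x i) < 1"
    and \<eta>: "0 < \<eta>" "real n * \<eta> < \<epsilon>"
    and T: "T \<in> sets borel" "\<And>y. y \<in> gem_simplex \<Longrightarrow> \<forall>i<n. \<bar>y i - x i\<bar> < \<epsilon> \<Longrightarrow> y \<in> T"
  shows "(\<Prod>i<n. (1 - stick_ratio x i) powr \<theta> - (1 - min (stick_ratio x i + \<eta>) 1) powr \<theta>)
    \<le> measure (gem_law \<theta>) T"
proof -
  interpret prob_space "beta1_iid \<theta>" by (rule prob_space_beta1_iid[OF \<theta>])
  define v where "v = stick_ratio x"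
  define b where "b i = min (v i + \<eta>) 1" for i
  have v: "0 \<le> v i" "v i < b i" "b i \<le> 1" if "i < n" for i
    using stick_ratio_bounds[OF x that] \<eta> unfolding v_def b_def by auto
  let ?E = "{u. \<forall>i<n. u i \<in> {v i<..<b i}}"
  have "(\<Prod>i<n. (1 - v i) powr \<theta> - (1 - b i) powr \<theta>) = (\<Prod>i<n. measure (beta1 \<theta>) {v i<..<b i})"
    using v \<theta> by (intro prod.cong refl measure_beta1_Ioo[symmetric]) auto
  also have "\<dots> = measure (beta1_iid \<theta>) ?E"
    by (rule measure_beta1_iid_box[OF \<theta>, symmetric]) simp
  also have "\<dots> \<le> measure (beta1_iid \<theta>) (gem_map -` T)"
  proof (rule finite_measure_mono_AE)
    show "gem_map -` T \<in> sets (beta1_iid \<theta>)"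
      using measurable_sets[OF gem_map_measurable T(1)] by (simp add: space_PiM)
    show "AE u in beta1_iid \<theta>. u \<in> ?E \<longrightarrow> u \<in> gem_map -` T"
      using AE_beta1_iid[OF \<theta>]
    proof eventually_elim
      case (elim u)
      show ?case
      proof
        assume "u \<in> ?E"
        then have "\<forall>j<n. \<bar>u j - stick_ratio x j\<bar> \<le> \<eta>"
          unfolding v_def b_def by force
        then have "\<forall>i<n. \<bar>gem_map u i - x i\<bar> < \<epsilon>"
          using abs_gem_map_diff_le_near_stick_ratio[OF x elim] \<eta>(2) by force
        then show "u \<in> gem_map -` T" using T(2)[OF gem_map_in_simplex[OF elim]] by simp
      qed
    qed
  qed
  also have "\<dots> = measure (gem_law \<theta>) T" by (rule measure_gem_law[OF T(1), symmetric])
  finally show ?thesis unfolding v_def b_def .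
qed

lemma tendsto_ereal_const_div_add: "((\<lambda>\<theta>::real. ereal (c / \<theta> + q)) \<longlongrightarrow> ereal q) at_top"
proof -
  have "((\<lambda>\<theta>::real. c / \<theta>) \<longlongrightarrow> 0) at_top"
    by (intro tendsto_divide_0[OF tendsto_const] filterlim_at_top_imp_at_infinity filterlim_ident)
  then have "((\<lambda>\<theta>::real. c / \<theta> + q) \<longlongrightarrow> 0 + q) at_top" by (intro tendsto_add) auto
  then show ?thesis by simp
qed

lemma Liminf_scaled_elog_ge:
  fixes m :: "real \<Rightarrow> real"
  assumes ev: "eventually (\<lambda>\<theta>. C * q powr \<theta> \<le> m \<theta>) at_top" and C: "0 < C" and q: "0 < q"
  shows "ereal (ln q) \<le> Liminf at_top (\<lambda>\<theta>. ereal (1 / \<theta>) * elog (m \<theta>))"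
proof -
  have "eventually (\<lambda>\<theta>. ereal (ln C / \<theta> + ln q) \<le> ereal (1 / \<theta>) * elog (m \<theta>)) at_top"
    using ev eventually_gt_at_top[of 0]
  proof eventually_elim
    case (elim \<theta>)
    have pos: "0 < C * q powr \<theta>" using C q by simp
    then have "ln (C * q powr \<theta>) \<le> ln (m \<theta>)" using elim by simp
    then have "ln C + \<theta> * ln q \<le> ln (m \<theta>)" using C q by (simp add: ln_mult ln_powr)
    then have "(ln C + \<theta> * ln q) / \<theta> \<le> ln (m \<theta>) / \<theta>" using elim by (intro divide_right_mono) auto
    then show ?case using pos elim by (simp add: elog_def add_divide_distrib)
  qed
  then have "Liminf at_top (\<lambda>\<theta>. ereal (ln C / \<theta> + ln q))
      \<le> Liminf at_top (\<lambda>\<theta>. ereal (1 / \<theta>) * elog (m \<theta>))"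
    by (rule Liminf_mono)
  then show ?thesis
    by (simp add: lim_imp_Liminf[OF trivial_limit_at_top_linorder tendsto_ereal_const_div_add])
qed

lemma Limsup_scaled_elog_le:
  fixes m :: "real \<Rightarrow> real"
  assumes bound: "\<And>\<theta>. 0 < \<theta> \<Longrightarrow> m \<theta> \<le> C * exp (- s * \<theta>)" and C: "0 < C"
  shows "Limsup at_top (\<lambda>\<theta>. ereal (1 / \<theta>) * elog (m \<theta>)) \<le> ereal (- s)"
proof -
  have "eventually (\<lambda>\<theta>. ereal (1 / \<theta>) * elog (m \<theta>) \<le> ereal (ln C / \<theta> + - s)) at_top"
    using eventually_gt_at_top[of 0]
  proof eventually_elim
    case (elim \<theta>)
    show ?case
    proof (cases "0 < m \<theta>")
      case True
      have "ln (m \<theta>) \<le> ln (C * exp (- s * \<theta>))" using True bound[OF elim] by simp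
      then have "ln (m \<theta>) \<le> ln C - s * \<theta>" using C by (simp add: ln_mult)
      then have "ln (m \<theta>) / \<theta> \<le> (ln C - s * \<theta>) / \<theta>" using elim by (intro divide_right_mono) auto
      then show ?thesis using True elim by (simp add: elog_def diff_divide_distrib)
    next
      case False
      then show ?thesis using elim by (simp add: elog_def)
    qed
  qed
  then have "Limsup at_top (\<lambda>\<theta>. ereal (1 / \<theta>) * elog (m \<theta>))
      \<le> Limsup at_top (\<lambda>\<theta>. ereal (ln C / \<theta> + - s))"
    by (rule Limsup_mono)
  also have "\<dots> = ereal (- s)"
    by (rule lim_imp_Limsup[OF trivial_limit_at_top_linorder tendsto_ereal_const_div_add])
  finally show ?thesis .
qed

lemma eventually_powr_le_half:
  fixes r :: real
  assumes "0 \<le> r" "r < 1"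
  shows "eventually (\<lambda>\<theta>. r powr \<theta> \<le> 1 / 2) at_top"
proof (cases "r = 0")
  case True
  then show ?thesis by simp
next
  case False
  with assms have "0 < r" "ln r < 0" by simp_all
  show ?thesis
  proof (rule eventually_at_top_linorderI)
    fix \<theta> assume "ln (1 / 2) / ln r \<le> \<theta>"
    then have "\<theta> * ln r \<le> ln (1 / 2)"
      using \<open>ln r < 0\<close> by (simp add: divide_le_eq)
    then have "exp (\<theta> * ln r) \<le> exp (ln (1 / 2))" by (simp only: exp_le_cancel_iff)
    then show "r powr \<theta> \<le> 1 / 2" using \<open>0 < r\<close> by (simp add: powr_def)
  qed
qed

lemma eventually_half_powr_le_powr_diff:
  fixes v b :: real
  assumes "0 \<le> v" "v < b" "b \<le> 1"
  shows "eventually (\<lambda>\<theta>. (1 / 2) * (1 - v) powr \<theta> \<le> (1 - v) powr \<theta> - (1 - b) powr \<theta>) at_top"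
proof -
  define r where "r = (1 - b) / (1 - v)"
  have "0 \<le> r" "r < 1" using assms unfolding r_def by (auto simp: divide_less_eq)
  have "1 - b = r * (1 - v)" unfolding r_def using assms by simp
  then have factor: "(1 - b) powr \<theta> = r powr \<theta> * (1 - v) powr \<theta>" for \<theta> by (simp add: powr_mult)
  show ?thesis
    using eventually_powr_le_half[OF \<open>0 \<le> r\<close> \<open>r < 1\<close>]
  proof eventually_elim
    case (elim \<theta>)
    have "(1 - b) powr \<theta> \<le> (1 / 2) * (1 - v) powr \<theta>"
      unfolding factor using elim by (intro mult_right_mono) auto
    then show ?case by simp
  qed
qed

lemma Liminf_gem_law_open_ge:
  assumes x: "x \<in> gem_simplex" "suminf x < 1" and V: "open V" "x \<in> V"
  shows "ereal (ln (1 - suminf x))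
    \<le> Liminf at_top (\<lambda>\<theta>. ereal (1 / \<theta>) * elog (measure (gem_law \<theta>) (V \<inter> gem_simplex)))"
proof -
  obtain n \<epsilon> where "0 < \<epsilon>" and cylinder: "\<And>y. \<forall>i<n. \<bar>y i - x i\<bar> < \<epsilon> \<Longrightarrow> y \<in> V"
    using open_contains_cylinder[OF V] by blast
  define \<eta> where "\<eta> = \<epsilon> / (real n + 1)"
  have \<eta>: "0 < \<eta>" "real n * \<eta> < \<epsilon>" unfolding \<eta>_def using \<open>0 < \<epsilon>\<close> by (auto simp: field_simps)
  have "summable x" "\<forall>k. 0 \<le> x k" using x(1) unfolding gem_simplex_def by auto
  then have partial: "(\<Sum>i<n. x i) \<le> suminf x" using sum_le_suminf[of x "{..<n}"] by fastforce
  have xn: "\<forall>i<n. 0 \<le> x i" "(\<Sum>i<n. x i) < 1" using \<open>\<forall>k. 0 \<le> x k\<close> partial x(2) by auto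
  define v where "v = stick_ratio x"
  define b where "b i = min (v i + \<eta>) 1" for i
  have "0 \<le> v i" "v i < b i" "b i \<le> 1" if "i < n" for i
    using stick_ratio_bounds[OF xn that] \<eta> unfolding v_def b_def by auto
  then have halves: "eventually (\<lambda>\<theta>. \<forall>i\<in>{..<n}.
      (1 / 2) * (1 - v i) powr \<theta> \<le> (1 - v i) powr \<theta> - (1 - b i) powr \<theta>) at_top"
    by (intro eventually_ball_finite ballI eventually_half_powr_le_powr_diff) auto
  have "V \<inter> gem_simplex \<in> sets borel"
    using borel_open[OF V(1)] borel_closed[OF closed_gem_simplex] by (rule sets.Int)
  then have box: "(\<Prod>i<n. (1 - v i) powr \<theta> - (1 - b i) powr \<theta>) \<le> measure (gem_law \<theta>) (V \<inter> gem_simplex)"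
    if "0 < \<theta>" for \<theta>
    unfolding v_def b_def using cylinder by (intro measure_gem_law_ge_prod[OF that xn \<eta>]) auto
  have "eventually (\<lambda>\<theta>. (1 / 2) ^ n * (1 - suminf x) powr \<theta> \<le> measure (gem_law \<theta>) (V \<inter> gem_simplex)) at_top"
    using halves eventually_gt_at_top[of 0]
  proof eventually_elim
    case (elim \<theta>)
    have "(1 / 2) ^ n * (1 - suminf x) powr \<theta> \<le> (1 / 2) ^ n * (1 - (\<Sum>i<n. x i)) powr \<theta>"
      using x(2) partial elim by (intro mult_left_mono powr_mono2) auto
    also have "1 - (\<Sum>i<n. x i) = (\<Prod>i<n. 1 - v i)"
      unfolding v_def using prod_one_minus_stick_ratio[OF xn] by simp
    also have "(1 / 2) ^ n * (\<Prod>i<n. 1 - v i) powr \<theta> = (\<Prod>i<n. (1 / 2) * (1 - v i) powr \<theta>)"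
      by (simp only: prod_powr_distrib prod.distrib prod_constant card_lessThan)
    also have "\<dots> \<le> (\<Prod>i<n. (1 - v i) powr \<theta> - (1 - b i) powr \<theta>)"
      using elim by (intro prod_mono) auto
    also have "\<dots> \<le> measure (gem_law \<theta>) (V \<inter> gem_simplex)" using box elim by auto
    finally show ?case .
  qed
  then show ?thesis by (rule Liminf_scaled_elog_ge) (use x(2) in auto)
qed

lemma gem_rate_gt_iff:
  assumes "x \<in> gem_simplex"
  shows "ereal s < gem_rate x \<longleftrightarrow> 1 - suminf x < exp (- s)"
proof (cases "suminf x < 1")
  case True
  then have "gem_rate x = ereal (- ln (1 - suminf x))"
    using assms by (simp add: gem_rate_def ln_div)
  then have "ereal s < gem_rate x \<longleftrightarrow> ln (1 - suminf x) < ln (exp (- s))"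
    by auto
  also have "\<dots> \<longleftrightarrow> 1 - suminf x < exp (- s)"
    using True by (intro ln_less_cancel_iff) auto
  finally show ?thesis .
next
  case False
  with assms have "suminf x = 1" unfolding gem_simplex_def by auto
  then show ?thesis by (simp add: gem_rate_def)
qed

lemma gem_law_local_upper_bound:
  assumes x: "x \<in> gem_simplex" and s: "0 \<le> s" and small: "1 - suminf x < exp (- s)"
  shows "\<exists>N T. open N \<and> x \<in> N \<and> T \<in> sets borel \<and> N \<inter> gem_simplex \<subseteq> T \<and>
           (\<forall>\<theta>>0. measure (gem_law \<theta>) T \<le> exp (- s * \<theta>))"
proof -
  have x_nonneg: "\<forall>k. 0 \<le> x k" and "summable x" using x unfolding gem_simplex_def by auto
  define e where "e = exp (- s)"
  have e: "0 < e" "e \<le> 1" using s unfolding e_def by auto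
  have "1 - e < suminf x" using small unfolding e_def by simp
  then obtain n where n: "1 - e < (\<Sum>i<n. x i)"
    using order_tendstoD(1)[OF summable_LIMSEQ[OF \<open>summable x\<close>]]
    by (auto simp: eventually_sequentially)
  define p where "p = (\<Sum>i<n. x i)"
  have p: "0 < p" "p \<le> 1"
    using n e x unfolding p_def gem_simplex_iff_partial_sums by force+
  have "max 0 ((1 - e) / p) < 1" using n p e unfolding p_def by (simp add: divide_less_eq)
  then obtain r where r: "max 0 ((1 - e) / p) < r" "r < 1" using dense by blast
  then have "1 - e < r * p" using p by (simp add: divide_less_eq mult.commute)
  have sum_r: "(\<Sum>i<n. r * x i) = r * p" unfolding p_def by (simp add: sum_distrib_left)
  have "r * p < 1 * p" using r(2) p(1) by (intro mult_strict_right_mono) auto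
  then have a: "\<forall>i<n. 0 \<le> r * x i" "(\<Sum>i<n. r * x i) < 1"
    using r(1) x_nonneg p(2) unfolding sum_r by auto
  define N where "N = {y::nat \<Rightarrow> real. \<forall>i\<in>{i. i < n \<and> 0 < x i}. y i \<in> {r * x i<..}}"
  define T where "T = {y::nat \<Rightarrow> real. \<forall>i<n. r * x i \<le> y i}"
  have "open N" unfolding N_def
    by (rule product_topology_basis'[where x="\<lambda>i. i" and U="\<lambda>i. {r * x i<..}"]) auto
  moreover have "x \<in> N" unfolding N_def using r by auto
  moreover have "T \<in> sets borel" unfolding T_def by (intro borel_closed closed_Collect_ge_coordinates)
  moreover have "N \<inter> gem_simplex \<subseteq> T"
    using x_nonneg unfolding N_def T_def gem_simplex_def by (force simp: order.order_iff_strict)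
  moreover have "measure (gem_law \<theta>) T \<le> exp (- s * \<theta>)" if "0 < \<theta>" for \<theta>
  proof -
    have "measure (gem_law \<theta>) T \<le> (1 - r * p) powr \<theta>"
      unfolding T_def sum_r[symmetric] by (rule measure_gem_law_Collect_ge_le[OF that a])
    also have "\<dots> \<le> e powr \<theta>"
      using \<open>1 - e < r * p\<close> a(2) sum_r that by (intro powr_mono2) auto
    also have "\<dots> = exp (- s * \<theta>)" unfolding e_def by (simp add: powr_def)
    finally show ?thesis .
  qed
  ultimately show ?thesis by blast
qed

lemma Limsup_gem_law_closed_le:
  assumes F: "closedin (top_of_set gem_simplex) F" and s: "0 \<le> s"
    and below: "ereal s < (INF x\<in>F. gem_rate x)"
  shows "Limsup at_top (\<lambda>\<theta>. ereal (1 / \<theta>) * elog (measure (gem_law \<theta>) F)) \<le> ereal (- s)"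
proof -
  have "compact F" "F \<subseteq> gem_simplex"
    using F compact_gem_simplex closed_gem_simplex unfolding closedin_closed
    by auto
  have "\<forall>x\<in>F. \<exists>N T. open N \<and> x \<in> N \<and> T \<in> sets borel \<and> N \<inter> gem_simplex \<subseteq> T \<and>
           (\<forall>\<theta>>0. measure (gem_law \<theta>) T \<le> exp (- s * \<theta>))"
  proof
    fix x assume "x \<in> F"
    then have "ereal s < gem_rate x" using below INF_lower[of x F gem_rate] by (rule_tac less_le_trans) auto
    then show "\<exists>N T. open N \<and> x \<in> N \<and> T \<in> sets borel \<and> N \<inter> gem_simplex \<subseteq> T \<and>
           (\<forall>\<theta>>0. measure (gem_law \<theta>) T \<le> exp (- s * \<theta>))"
      using \<open>x \<in> F\<close> \<open>F \<subseteq> gem_simplex\<close> gem_rate_gt_iff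
      by (intro gem_law_local_upper_bound s) auto
  qed
  then obtain N T where NT: "\<And>x. x \<in> F \<Longrightarrow> open (N x)" "\<And>x. x \<in> F \<Longrightarrow> x \<in> N x"
    "\<And>x. x \<in> F \<Longrightarrow> T x \<in> sets borel" "\<And>x. x \<in> F \<Longrightarrow> N x \<inter> gem_simplex \<subseteq> T x"
    "\<And>x \<theta>. x \<in> F \<Longrightarrow> 0 < \<theta> \<Longrightarrow> measure (gem_law \<theta>) (T x) \<le> exp (- s * \<theta>)"
    by metis
  obtain K where K: "K \<subseteq> F" "finite K" "F \<subseteq> (\<Union>x\<in>K. N x)"
    using compactE_image[OF \<open>compact F\<close>, of F N] NT(1,2) by blast
  have cover: "F \<subseteq> (\<Union>x\<in>K. T x)" using K(1,3) \<open>F \<subseteq> gem_simplex\<close> NT(4) by blast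
  have "measure (gem_law \<theta>) F \<le> real (card K + 1) * exp (- s * \<theta>)" if "0 < \<theta>" for \<theta>
  proof -
    interpret prob_space "gem_law \<theta>" by (rule prob_space_gem_law[OF that])
    have sets: "T ` K \<subseteq> sets (gem_law \<theta>)" using K(1) NT(3) by (auto simp: gem_law_def)
    have "measure (gem_law \<theta>) F \<le> measure (gem_law \<theta>) (\<Union>x\<in>K. T x)"
      using cover sets K(2) by (intro finite_measure_mono) auto
    also have "\<dots> \<le> (\<Sum>x\<in>K. measure (gem_law \<theta>) (T x))"
      by (rule finite_measure_subadditive_finite[OF K(2) sets])
    also have "\<dots> \<le> (\<Sum>x\<in>K. exp (- s * \<theta>))"
      using K(1) NT(5) that by (intro sum_mono) auto
    also have "\<dots> \<le> real (card K + 1) * exp (- s * \<theta>)" by simp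
    finally show ?thesis .
  qed
  then show ?thesis by (rule Limsup_scaled_elog_le) auto
qed

lemma ereal_le_uminus_of_real_bounds:
  fixes L c :: ereal
  assumes "L \<le> 0" and bound: "\<And>s. 0 \<le> s \<Longrightarrow> ereal s < c \<Longrightarrow> L \<le> ereal (- s)"
  shows "L \<le> - c"
proof (rule ccontr)
  assume "\<not> L \<le> - c"
  then have "- L < c" by (simp add: not_le ereal_uminus_less_reorder)
  then obtain z where z: "- L < z" "z < c" using dense by blast
  have "0 \<le> - L" using \<open>L \<le> 0\<close> by (simp add: ereal_uminus_le_reorder)
  then have "0 < z" using z(1) by (rule le_less_trans)
  with z obtain s where "z = ereal s" "0 \<le> s" by (cases z) auto
  then have "L \<le> ereal (- s)" using bound z(2) by simp
  then have "ereal s \<le> - L" using ereal_minus_le_minus[of "ereal (- s)" L] by simp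
  then show False using z(1) \<open>z = ereal s\<close> by simp
qed

lemma gem_ldp_upper_bound:
  assumes "closedin (top_of_set gem_simplex) F"
  shows "Limsup at_top (\<lambda>\<theta>::real. ereal (1 / \<theta>) * elog (measure (gem_law \<theta>) F))
    \<le> - (INF x\<in>F. gem_rate x)"
proof (rule ereal_le_uminus_of_real_bounds)
  have "measure (gem_law \<theta>) F \<le> 1 * exp (- 0 * \<theta>)" if "0 < \<theta>" for \<theta>
    using prob_space.prob_le_1[OF prob_space_gem_law[OF that]] by simp
  from Limsup_scaled_elog_le[OF this]
  show "Limsup at_top (\<lambda>\<theta>. ereal (1 / \<theta>) * elog (measure (gem_law \<theta>) F)) \<le> 0"
    by (simp add: zero_ereal_def)
qed (rule Limsup_gem_law_closed_le[OF assms])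

lemma gem_ldp_lower_bound:
  assumes "openin (top_of_set gem_simplex) G"
  shows "- (INF x\<in>G. gem_rate x)
    \<le> Liminf at_top (\<lambda>\<theta>::real. ereal (1 / \<theta>) * elog (measure (gem_law \<theta>) G))"
proof -
  obtain V where V: "open V" "G = V \<inter> gem_simplex" using assms unfolding openin_open by blast
  let ?L = "Liminf at_top (\<lambda>\<theta>::real. ereal (1 / \<theta>) * elog (measure (gem_law \<theta>) G))"
  have "- ?L \<le> gem_rate x" if "x \<in> G" for x
  proof (cases "x \<in> gem_simplex \<and> suminf x < 1")
    case True
    then have "ereal (ln (1 - suminf x)) \<le> ?L"
      using Liminf_gem_law_open_ge[OF _ _ V(1)] that unfolding V(2) by blast
    moreover have "gem_rate x = ereal (- ln (1 - suminf x))"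
      using True by (simp add: gem_rate_def ln_div)
    ultimately show ?thesis by (simp add: ereal_uminus_le_reorder)
  next
    case False
    then show ?thesis by (auto simp: gem_rate_def)
  qed
  then have "- ?L \<le> (INF x\<in>G. gem_rate x)" by (rule INF_greatest)
  then show ?thesis by (simp add: ereal_uminus_le_reorder)
qed

theorem theorem2p2:
  shows "(\<forall>F. closedin (top_of_set gem_simplex) F \<longrightarrow>
            Limsup at_top (\<lambda>\<theta>::real. ereal (1 / \<theta>) * elog (measure (gem_law \<theta>) F))
              \<le> - (INF x\<in>F. gem_rate x))
       \<and> (\<forall>G. openin (top_of_set gem_simplex) G \<longrightarrow>
            Liminf at_top (\<lambda>\<theta>::real. ereal (1 / \<theta>) * elog (measure (gem_law \<theta>) G))
              \<ge> - (INF x\<in>G. gem_rate x))"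
  using gem_ldp_upper_bound gem_ldp_lower_bound by blast

end
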